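(* Let $A\in\mathbb{C}^{n\times n}$ and let $\bar{A}$ denote its entrywise complex conjugate. Then $A$ is G-Hamiltonian if and only if $A$ is similar to $-\bar{A}$, i.e. there exists an invertible $Q\in\mathbb{C}^{n\times n}$ with $Q^{-1}AQ=-\bar{A}$.
   Context: A matrix $A\in\mathbb{C}^{n\times n}$ is called G-Hamiltonian if there exist a non-singular Hermitian matrix $G\in\mathbb{C}^{n\times n}$ and a Hermitian matrix $S\in\mathbb{C}^{n\times n}$ such that $A=iG^{-1}S$. *)

theory Defs
  imports "HOL-Analysis.Analysis"
begin

definition mat_cnj :: "complex^'n^'n \<Rightarrow> complex^'n^'n" where
  "mat_cnj A = (\<chi> i j. cnj (A $ i $ j))"

definition adjoint_mat :: "complex^'n^'n \<Rightarrow> complex^'n^'n" where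
  "adjoint_mat A = transpose (mat_cnj A)"

definition hermitian_mat :: "complex^'n^'n \<Rightarrow> bool" where
  "hermitian_mat A \<longleftrightarrow> adjoint_mat A = A"

definition G_Hamiltonian :: "complex^'n^'n \<Rightarrow> bool" where
  "G_Hamiltonian A \<longleftrightarrow> (\<exists>G S. invertible G \<and> hermitian_mat G \<and> hermitian_mat S \<and>
      A = mat \<i> ** (matrix_inv G ** S))"

end

theory Submission
  imports Defs "Jordan_Normal_Form.Jordan_Normal_Form_Existence"
begin

(* If A = i G^-1 S with G, S Hermitian, then G A G^-1 = -A^H, so -A is similar to A^H, and A^H is
   similar to its transpose conj A because every complex matrix is similar to its transpose (by
   the Jordan normal form, a Jordan block being similar to its transpose via the exchange matrix).
   Conversely, a similarity X^-1 A^H X = -A means A^H X = -X A. This equation is preserved by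
   taking adjoints and linear combinations, so it also holds for every a X + conj a X^H, which is
   Hermitian. Along the pencil t \<mapsto> (X + X^H)/2 + t i (X^H - X)/2 the determinant is a polynomial
   that is nonzero at t = i (where the pencil is X), hence nonzero at some real t; there the pencil
   is an invertible Hermitian G with A^H G = -G A, and S = -i G A is Hermitian. *)

(* As in Defs, mat is the scalar matrix of HOL-Analysis; Jordan_Normal_Form matrices are built
   with Matrix.mat. *)
hide_const (open) Matrix.mat

definition exchange_mat :: "nat \<Rightarrow> 'a::{zero,one} Matrix.mat" where
  "exchange_mat n = Matrix.mat n n (\<lambda>(i, j). if i + j = n - 1 then 1 else 0)"

lemma exchange_mat_carrier [simp]: "exchange_mat n \<in> carrier_mat n n"
  by (simp add: exchange_mat_def)

lemma exchange_mat_mult_nth: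
  fixes B :: "'a::comm_ring_1 Matrix.mat"
  assumes "dim_row B = n" and "i < n" and "j < dim_col B"
  shows "(exchange_mat n * B) $$ (i, j) = B $$ (n - 1 - i, j)"
proof -
  have "(exchange_mat n * B) $$ (i, j) = (\<Sum>k<n. (if i + k = n - 1 then 1 else 0) * B $$ (k, j))"
    using assms by (simp add: scalar_prod_def exchange_mat_def atLeast0LessThan)
  also have "\<dots> = (\<Sum>k<n. if k = n - 1 - i then B $$ (k, j) else 0)"
    using assms(2) by (intro sum.cong) auto
  finally show ?thesis
    using assms(2) by simp
qed

lemma mult_exchange_mat_nth:
  fixes B :: "'a::comm_ring_1 Matrix.mat"
  assumes "dim_col B = n" and "i < dim_row B" and "j < n"
  shows "(B * exchange_mat n) $$ (i, j) = B $$ (i, n - 1 - j)"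
proof -
  have "(B * exchange_mat n) $$ (i, j) = (\<Sum>k<n. B $$ (i, k) * (if k + j = n - 1 then 1 else 0))"
    using assms by (simp add: scalar_prod_def exchange_mat_def atLeast0LessThan)
  also have "\<dots> = (\<Sum>k<n. if k = n - 1 - j then B $$ (i, k) else 0)"
    using assms(3) by (intro sum.cong) auto
  finally show ?thesis
    using assms(3) by simp
qed

lemma exchange_mat_squared: "exchange_mat n * exchange_mat n = (1\<^sub>m n :: 'a::comm_ring_1 Matrix.mat)"
proof (rule eq_matI)
  fix i j
  assume "i < dim_row (1\<^sub>m n :: 'a Matrix.mat)" "j < dim_col (1\<^sub>m n :: 'a Matrix.mat)"
  then show "(exchange_mat n * exchange_mat n) $$ (i, j) = (1\<^sub>m n :: 'a Matrix.mat) $$ (i, j)"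
    by (subst exchange_mat_mult_nth) (auto simp: exchange_mat_def)
qed (simp_all add: exchange_mat_def)

lemma similar_mat_transpose_jordan_block:
  "similar_mat (transpose_mat (jordan_block n (a :: 'a::comm_ring_1))) (jordan_block n a)"
proof (rule similar_matI[where n = n and P = "exchange_mat n" and Q = "exchange_mat n"])
  show "transpose_mat (jordan_block n a) = exchange_mat n * jordan_block n a * exchange_mat n"
  proof (rule eq_matI)
    fix i j
    assume "i < dim_row (exchange_mat n * jordan_block n a * exchange_mat n)"
      and "j < dim_col (exchange_mat n * jordan_block n a * exchange_mat n)"
    then have i: "i < n" and j: "j < n"
      by (simp_all add: exchange_mat_def)
    have "(exchange_mat n * jordan_block n a * exchange_mat n) $$ (i, j) =
        (exchange_mat n * jordan_block n a) $$ (i, n - 1 - j)"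
      using i j by (intro mult_exchange_mat_nth) (simp_all add: exchange_mat_def)
    also have "\<dots> = jordan_block n a $$ (n - 1 - i, n - 1 - j)"
      using i j by (intro exchange_mat_mult_nth) simp_all
    finally show "transpose_mat (jordan_block n a) $$ (i, j) =
        (exchange_mat n * jordan_block n a * exchange_mat n) $$ (i, j)"
      using i j by auto
  qed (simp_all add: exchange_mat_def)
qed (auto simp: exchange_mat_squared)

lemma similar_mat_transpose:
  fixes A B :: "'a::comm_ring_1 Matrix.mat"
  assumes "similar_mat A B"
  shows "similar_mat (transpose_mat A) (transpose_mat B)"
proof -
  obtain n P Q where carrier: "{A, B, P, Q} \<subseteq> carrier_mat n n"
    and PQ: "P * Q = 1\<^sub>m n" and QP: "Q * P = 1\<^sub>m n" and A: "A = P * B * Q"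
    using similar_matD[OF assms] by blast
  have B: "B \<in> carrier_mat n n" and P: "P \<in> carrier_mat n n" and Q: "Q \<in> carrier_mat n n"
    using carrier by auto
  have "transpose_mat A = transpose_mat Q * transpose_mat (P * B)"
    unfolding A using B P Q by (intro transpose_mult[of _ n n]) auto
  also have "transpose_mat (P * B) = transpose_mat B * transpose_mat P"
    by (rule transpose_mult[OF P B])
  also have "transpose_mat Q * (transpose_mat B * transpose_mat P) =
      transpose_mat Q * transpose_mat B * transpose_mat P"
    using B P Q by (intro assoc_mult_mat[symmetric, of _ n n _ n _ n]) auto
  finally have "transpose_mat A = transpose_mat Q * transpose_mat B * transpose_mat P" .
  moreover have "transpose_mat Q * transpose_mat P = 1\<^sub>m n" "transpose_mat P * transpose_mat Q = 1\<^sub>m n"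
    using PQ QP by (simp_all flip: transpose_mult[OF P Q] transpose_mult[OF Q P])
  ultimately show ?thesis
    using carrier by (intro similar_matI[where n = n]) auto
qed

lemma similar_mat_transpose_jordan_matrix:
  "similar_mat (transpose_mat (jordan_matrix (n_as :: (nat \<times> 'a::comm_ring_1) list))) (jordan_matrix n_as)"
proof (induction n_as)
  case Nil
  have "transpose_mat (jordan_matrix ([] :: (nat \<times> 'a) list)) = jordan_matrix []"
    by (rule eq_matI) (auto simp: jordan_matrix_def)
  then show ?case
    by (metis jordan_matrix_carrier similar_mat_refl)
next
  case (Cons na n_as)
  obtain n a where na: "na = (n, a)"
    by force
  let ?m = "sum_list (map fst n_as)"
  have "transpose_mat (jordan_matrix (na # n_as)) =
      four_block_mat (transpose_mat (jordan_block n a)) (0\<^sub>m n ?m) (0\<^sub>m ?m n)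
        (transpose_mat (jordan_matrix n_as))"
    unfolding na jordan_matrix_Cons
    by (subst transpose_four_block_mat[of "jordan_block n a" n n "0\<^sub>m n ?m" ?m "0\<^sub>m ?m n" ?m
          "jordan_matrix n_as"]) auto
  then show ?case
    unfolding na jordan_matrix_Cons
    by (auto intro!: similar_mat_four_block_0_0 similar_mat_transpose_jordan_block Cons)
qed

lemma jordan_nf_similar_mat_transpose:
  assumes "jordan_nf (A :: 'a::comm_ring_1 Matrix.mat) n_as"
  shows "similar_mat (transpose_mat A) A"
proof -
  have A: "similar_mat A (jordan_matrix n_as)"
    using assms by (simp add: jordan_nf_def)
  show ?thesis
    using similar_mat_trans[OF similar_mat_transpose[OF A] similar_mat_transpose_jordan_matrix]
      similar_mat_sym[OF A] by (rule similar_mat_trans)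
qed

lemma similar_mat_transpose_complex:
  assumes "(A :: complex Matrix.mat) \<in> carrier_mat n n"
  shows "similar_mat (transpose_mat A) A"
proof -
  obtain as where "char_poly A = (\<Prod>a\<leftarrow>as. [:- a, 1:])"
    using char_poly_factorized[OF assms] by blast
  then obtain n_as where "jordan_nf A n_as"
    using jordan_nf_exists[OF assms] by blast
  then show ?thesis
    by (rule jordan_nf_similar_mat_transpose)
qed

lemma matrix_inv_unique:
  fixes A :: "'a::semiring_1^'n^'m" and B :: "'a^'m^'n"
  assumes "A ** B = mat 1" and "B ** A = mat 1"
  shows "matrix_inv A = B"
proof -
  have "A ** matrix_inv A = mat 1 \<and> matrix_inv A ** A = mat 1"
    unfolding matrix_inv_def using assms by (rule someI[of _ B, OF conjI])
  then have "B ** (A ** matrix_inv A) = B"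
    by simp
  then show ?thesis
    using assms(2) by (simp add: matrix_mul_assoc)
qed

lemma
  fixes A :: "'a::semiring_1^'n^'m"
  assumes "invertible A"
  shows matrix_inv_right: "A ** matrix_inv A = mat 1"
    and matrix_inv_left: "matrix_inv A ** A = mat 1"
  using someI_ex[OF assms[unfolded invertible_def]] unfolding matrix_inv_def by blast+

lemma
  fixes A :: "'a::semiring_1^'n^'m"
  assumes "invertible A"
  shows invertible_matrix_inv: "invertible (matrix_inv A)"
    and matrix_inv_matrix_inv: "matrix_inv (matrix_inv A) = A"
  using matrix_inv_left[OF assms] matrix_inv_right[OF assms]
  by (auto simp: invertible_def intro: matrix_inv_unique)

lemma matrix_inv_mult:
  fixes A B :: "'a::semiring_1^'n^'n"
  assumes "invertible A" and "invertible B"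
  shows "matrix_inv (A ** B) = matrix_inv B ** matrix_inv A"
proof (rule matrix_inv_unique)
  show "A ** B ** (matrix_inv B ** matrix_inv A) = mat 1"
    by (metis assms matrix_inv_right matrix_mul_assoc matrix_mul_rid)
  show "matrix_inv B ** matrix_inv A ** (A ** B) = mat 1"
    by (metis assms matrix_inv_left matrix_mul_assoc matrix_mul_rid)
qed

lemma uminus_matrix_mul: "(- A) ** B = - (A ** (B :: 'a::ring_1^'p^'n))"
  by (simp add: matrix_matrix_mult_def Finite_Cartesian_Product.vec_eq_iff sum_negf)

lemma matrix_mul_uminus: "A ** (- B) = - (A ** (B :: 'a::ring_1^'p^'n))"
  by (simp add: matrix_matrix_mult_def Finite_Cartesian_Product.vec_eq_iff sum_negf)

lemma matrix_add_rdistrib: "(A + B) ** C = A ** C + B ** (C :: 'a::semiring_1^'p^'n)"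
  by (simp add: matrix_matrix_mult_def Finite_Cartesian_Product.vec_eq_iff distrib_right sum.distrib)

lemma mat_matrix_mul_nth [simp]: "(mat c ** A) $ i $ j = c * (A :: 'a::semiring_1^'m^'n) $ i $ j"
  by (simp add: matrix_matrix_mult_def Finite_Cartesian_Product.mat_def if_distrib if_distribR
      cong: if_cong)

lemma matrix_mul_mat_commute: "A ** (mat c ** B) = mat c ** (A ** (B :: 'a::comm_semiring_1^'p^'n))"
  by (simp add: matrix_matrix_mult_def Finite_Cartesian_Product.vec_eq_iff
      Finite_Cartesian_Product.mat_def if_distrib if_distribR sum_distrib_left mult.left_commute
      cong: if_cong)

definition similar_matrix :: "'a::semiring_1^'n^'n \<Rightarrow> 'a^'n^'n \<Rightarrow> bool" where
  "similar_matrix A B \<longleftrightarrow> (\<exists>Q. invertible Q \<and> matrix_inv Q ** A ** Q = B)"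

lemma similar_matrix_sym:
  assumes "similar_matrix A B"
  shows "similar_matrix B A"
proof -
  obtain Q where Q: "invertible Q" and B: "matrix_inv Q ** A ** Q = B"
    using assms by (auto simp: similar_matrix_def)
  have "matrix_inv (matrix_inv Q) ** B ** matrix_inv Q =
      (Q ** matrix_inv Q) ** A ** (Q ** matrix_inv Q)"
    unfolding B[symmetric] matrix_inv_matrix_inv[OF Q] by (simp add: matrix_mul_assoc)
  then show ?thesis
    unfolding similar_matrix_def using Q
    by (metis invertible_matrix_inv matrix_inv_right matrix_mul_lid matrix_mul_rid)
qed

lemma similar_matrix_trans:
  assumes "similar_matrix A B" and "similar_matrix B C"
  shows "similar_matrix A C"
proof -
  obtain P Q where P: "invertible P" "matrix_inv P ** A ** P = B"
    and Q: "invertible Q" "matrix_inv Q ** B ** Q = C"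
    using assms by (auto simp: similar_matrix_def)
  have "matrix_inv (P ** Q) ** A ** (P ** Q) = C"
    unfolding matrix_inv_mult[OF P(1) Q(1)] P(2)[symmetric] Q(2)[symmetric]
    by (simp add: matrix_mul_assoc)
  then show ?thesis
    unfolding similar_matrix_def using invertible_mult[OF P(1) Q(1)] by blast
qed

lemma similar_matrix_uminus_iff:
  "similar_matrix (- A) (- B) \<longleftrightarrow> similar_matrix A (B :: 'a::ring_1^'n^'n)"
  by (simp add: similar_matrix_def uminus_matrix_mul matrix_mul_uminus)

definition mat_of_matrix :: "'a^'n^'n \<Rightarrow> 'a Matrix.mat" where
  "mat_of_matrix A = Matrix.mat CARD('n) CARD('n)
     (\<lambda>(i, j). A $ from_nat_into UNIV i $ from_nat_into UNIV j)"

definition matrix_of_mat :: "'a Matrix.mat \<Rightarrow> 'a^'n^'n" where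
  "matrix_of_mat M = (\<chi> i j. M $$ (to_nat_on UNIV i, to_nat_on UNIV j))"

lemma bij_betw_to_nat_on_UNIV: "bij_betw (to_nat_on (UNIV :: 'n::finite set)) UNIV {..<CARD('n)}"
  by (rule to_nat_on_finite) simp

lemma to_nat_on_UNIV_less [simp]: "to_nat_on (UNIV :: 'n::finite set) i < CARD('n)"
  using bij_betw_apply[OF bij_betw_to_nat_on_UNIV] by blast

lemma
  fixes A :: "'a^'n^'n"
  shows dim_row_mat_of_matrix [simp]: "dim_row (mat_of_matrix A) = CARD('n)"
    and dim_col_mat_of_matrix [simp]: "dim_col (mat_of_matrix A) = CARD('n)"
  by (simp_all add: mat_of_matrix_def)

lemma mat_of_matrix_carrier [simp]: "mat_of_matrix (A :: 'a^'n^'n) \<in> carrier_mat CARD('n) CARD('n)"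
  by (simp add: carrier_matI)

lemma matrix_of_mat_of_matrix [simp]: "matrix_of_mat (mat_of_matrix A) = A"
  by (simp add: matrix_of_mat_def mat_of_matrix_def Finite_Cartesian_Product.vec_eq_iff)

lemma mat_of_matrix_transpose: "mat_of_matrix (transpose A) = transpose_mat (mat_of_matrix A)"
  by (rule eq_matI) (auto simp: mat_of_matrix_def transpose_def)

lemma matrix_of_mat_one: "matrix_of_mat (1\<^sub>m CARD('n)) = (mat 1 :: 'a::{zero,one}^'n^'n)"
  by (simp add: matrix_of_mat_def Finite_Cartesian_Product.vec_eq_iff
      Finite_Cartesian_Product.mat_def)

lemma matrix_of_mat_mult:
  fixes M N :: "'a::comm_semiring_1 Matrix.mat"
  assumes "M \<in> carrier_mat CARD('n) CARD('n)" and "N \<in> carrier_mat CARD('n) CARD('n)"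
  shows "(matrix_of_mat (M * N) :: 'a^'n^'n) = matrix_of_mat M ** matrix_of_mat N"
proof -
  have "(M * N) $$ (to_nat_on UNIV i, to_nat_on UNIV j) =
      (\<Sum>k::'n\<in>UNIV. M $$ (to_nat_on UNIV i, to_nat_on UNIV k) *
        N $$ (to_nat_on UNIV k, to_nat_on UNIV j))"
    for i j :: 'n
  proof -
    have "(M * N) $$ (to_nat_on UNIV i, to_nat_on UNIV j) =
        (\<Sum>k<CARD('n). M $$ (to_nat_on UNIV i, k) * N $$ (k, to_nat_on UNIV j))"
      using assms by (simp add: scalar_prod_def atLeast0LessThan)
    also have "\<dots> = (\<Sum>k::'n\<in>UNIV. M $$ (to_nat_on UNIV i, to_nat_on UNIV k) *
        N $$ (to_nat_on UNIV k, to_nat_on UNIV j))"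
      using sum.reindex_bij_betw[OF bij_betw_to_nat_on_UNIV[where 'n = 'n],
          of "\<lambda>k. M $$ (to_nat_on UNIV i, k) * N $$ (k, to_nat_on UNIV j)"]
      by (rule sym)
    finally show ?thesis .
  qed
  then show ?thesis
    by (simp add: matrix_of_mat_def Finite_Cartesian_Product.vec_eq_iff matrix_matrix_mult_def)
qed

lemma similar_mat_imp_similar_matrix:
  fixes A B :: "'a::comm_semiring_1^'n^'n"
  assumes "similar_mat (mat_of_matrix A) (mat_of_matrix B)"
  shows "similar_matrix A B"
proof -
  obtain n P Q where carrier: "{mat_of_matrix A, mat_of_matrix B, P, Q} \<subseteq> carrier_mat n n"
    and PQ: "P * Q = 1\<^sub>m n" and QP: "Q * P = 1\<^sub>m n"
    and A: "mat_of_matrix A = P * mat_of_matrix B * Q"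
    using similar_matD[OF assms] by blast
  have "mat_of_matrix A \<in> carrier_mat n n"
    using carrier by simp
  then have "n = CARD('n)"
    by (metis carrier_matD(1) dim_row_mat_of_matrix)
  then have P: "P \<in> carrier_mat CARD('n) CARD('n)" and Q: "Q \<in> carrier_mat CARD('n) CARD('n)"
    using carrier by simp_all
  define P' Q' where "P' = (matrix_of_mat P :: 'a^'n^'n)" and "Q' = (matrix_of_mat Q :: 'a^'n^'n)"
  have P'Q': "P' ** Q' = mat 1"
    using PQ unfolding P'_def Q'_def matrix_of_mat_mult[OF P Q, symmetric] \<open>n = CARD('n)\<close>
    by (rule arg_cong[THEN trans]) (rule matrix_of_mat_one)
  have Q'P': "Q' ** P' = mat 1"
    using QP unfolding P'_def Q'_def matrix_of_mat_mult[OF Q P, symmetric] \<open>n = CARD('n)\<close>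
    by (rule arg_cong[THEN trans]) (rule matrix_of_mat_one)
  have "A = matrix_of_mat (P * mat_of_matrix B * Q)"
    unfolding A[symmetric] by (rule matrix_of_mat_of_matrix[symmetric])
  also have "\<dots> = matrix_of_mat (P * mat_of_matrix B) ** Q'"
    unfolding Q'_def using P Q by (intro matrix_of_mat_mult) auto
  also have "matrix_of_mat (P * mat_of_matrix B) = P' ** B"
    unfolding P'_def using P by (subst matrix_of_mat_mult) auto
  finally have "matrix_inv P' ** A ** P' = (Q' ** P') ** B ** (Q' ** P')"
    unfolding matrix_inv_unique[OF P'Q' Q'P'] by (simp only: matrix_mul_assoc)
  then have "matrix_inv P' ** A ** P' = B"
    unfolding Q'P' by simp
  moreover have "invertible P'"
    using P'Q' Q'P' by (auto simp: invertible_def)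
  ultimately show ?thesis
    unfolding similar_matrix_def by blast
qed

lemma similar_matrix_transpose: "similar_matrix (transpose A) (A :: complex^'n^'n)"
  using similar_mat_transpose_complex[OF mat_of_matrix_carrier[of A]]
  by (intro similar_mat_imp_similar_matrix) (simp add: mat_of_matrix_transpose)

lemma adjoint_mat_nth [simp]: "adjoint_mat A $ i $ j = cnj (A $ j $ i)"
  by (simp add: adjoint_mat_def transpose_def mat_cnj_def)

lemma adjoint_mat_adjoint_mat [simp]: "adjoint_mat (adjoint_mat A) = A"
  by (simp add: Finite_Cartesian_Product.vec_eq_iff)

lemma adjoint_mat_uminus: "adjoint_mat (- A) = - adjoint_mat A"
  by (simp add: Finite_Cartesian_Product.vec_eq_iff)

lemma adjoint_mat_mult: "adjoint_mat (A ** B) = adjoint_mat B ** adjoint_mat A"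
  by (simp add: Finite_Cartesian_Product.vec_eq_iff matrix_matrix_mult_def mult.commute)

lemma similar_matrix_adjoint_mat_cnj: "similar_matrix (adjoint_mat A) (mat_cnj A)"
  unfolding adjoint_mat_def by (rule similar_matrix_transpose)

lemma hermitian_mat_iff: "hermitian_mat A \<longleftrightarrow> (\<forall>i j. cnj (A $ j $ i) = A $ i $ j)"
  by (simp add: hermitian_mat_def Finite_Cartesian_Product.vec_eq_iff)

definition skew_adjoint_wrt :: "complex^'n^'n \<Rightarrow> complex^'n^'n \<Rightarrow> bool" where
  "skew_adjoint_wrt G A \<longleftrightarrow> adjoint_mat A ** G = - (G ** A)"

lemma G_Hamiltonian_iff_skew_adjoint_wrt:
  "G_Hamiltonian A \<longleftrightarrow> (\<exists>G. invertible G \<and> hermitian_mat G \<and> skew_adjoint_wrt G A)"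
proof
  assume "G_Hamiltonian A"
  then obtain G S where G: "invertible G" "hermitian_mat G" and S: "hermitian_mat S"
    and A: "A = mat \<i> ** (matrix_inv G ** S)"
    unfolding G_Hamiltonian_def by blast
  have "G ** A = mat \<i> ** (G ** (matrix_inv G ** S))"
    unfolding A by (rule matrix_mul_mat_commute)
  also have "G ** (matrix_inv G ** S) = S"
    by (simp add: matrix_mul_assoc matrix_inv_right[OF G(1)])
  finally have GA: "G ** A = mat \<i> ** S" .
  have "adjoint_mat A ** G = adjoint_mat (G ** A)"
    using G(2) by (simp add: adjoint_mat_mult hermitian_mat_def)
  also have "\<dots> = - (G ** A)"
    using S unfolding GA by (simp add: hermitian_mat_iff Finite_Cartesian_Product.vec_eq_iff)
  finally show "\<exists>G. invertible G \<and> hermitian_mat G \<and> skew_adjoint_wrt G A"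
    using G unfolding skew_adjoint_wrt_def by blast
next
  assume "\<exists>G. invertible G \<and> hermitian_mat G \<and> skew_adjoint_wrt G A"
  then obtain G where G: "invertible G" "hermitian_mat G" and skew: "adjoint_mat A ** G = - (G ** A)"
    unfolding skew_adjoint_wrt_def by blast
  define S where "S = mat (- \<i>) ** (G ** A)"
  have "adjoint_mat (G ** A) = - (G ** A)"
    using G(2) skew by (simp add: adjoint_mat_mult hermitian_mat_def)
  then have "hermitian_mat S"
    unfolding S_def by (simp add: hermitian_mat_iff Finite_Cartesian_Product.vec_eq_iff)
  moreover have "matrix_inv G ** S = mat (- \<i>) ** A"
    unfolding S_def matrix_mul_mat_commute by (simp add: matrix_mul_assoc matrix_inv_left[OF G(1)])
  then have "A = mat \<i> ** (matrix_inv G ** S)"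
    by (simp add: Finite_Cartesian_Product.vec_eq_iff)
  ultimately show "G_Hamiltonian A"
    using G unfolding G_Hamiltonian_def by blast
qed

lemma skew_adjoint_wrt_adjoint_mat:
  assumes "skew_adjoint_wrt G A"
  shows "skew_adjoint_wrt (adjoint_mat G) A"
proof -
  have "adjoint_mat (adjoint_mat A ** G) = adjoint_mat (- (G ** A))"
    using assms unfolding skew_adjoint_wrt_def by simp
  then show ?thesis
    unfolding skew_adjoint_wrt_def adjoint_mat_mult adjoint_mat_uminus by simp
qed

lemma skew_adjoint_wrt_lincomb:
  assumes "skew_adjoint_wrt G A" and "skew_adjoint_wrt H A"
  shows "skew_adjoint_wrt (mat a ** G + mat b ** H) A"
proof -
  have "adjoint_mat A ** (mat a ** G + mat b ** H) =
      mat a ** (adjoint_mat A ** G) + mat b ** (adjoint_mat A ** H)"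
    by (simp add: matrix_add_ldistrib matrix_mul_mat_commute)
  also have "\<dots> = - ((mat a ** G + mat b ** H) ** A)"
    using assms
    by (simp add: skew_adjoint_wrt_def matrix_mul_uminus matrix_add_rdistrib matrix_mul_assoc)
  finally show ?thesis
    unfolding skew_adjoint_wrt_def .
qed

lemma hermitian_mat_lincomb_adjoint_mat: "hermitian_mat (mat a ** X + mat (cnj a) ** adjoint_mat X)"
  by (simp add: hermitian_mat_iff)

lemma det_pencil_poly:
  fixes H K :: "'a::comm_ring_1^'n^'n"
  shows "\<exists>p. \<forall>t. poly p t = Determinants.det (\<chi> i j. H $ i $ j + t * K $ i $ j)"
proof -
  define p where "p = (\<Sum>q\<in>{q. q permutes (UNIV :: 'n set)}.
      of_int (sign q) * (\<Prod>i\<in>UNIV. [:H $ i $ q i, K $ i $ q i:]))"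
  have "poly p t = Determinants.det (\<chi> i j. H $ i $ j + t * K $ i $ j)" for t
    unfolding p_def Determinants.det_def by (simp add: poly_sum poly_prod)
  then show ?thesis
    by blast
qed

lemma poly_nonzero_at_some_real:
  fixes p :: "complex poly"
  assumes "p \<noteq> 0"
  obtains r :: real where "poly p (of_real r) \<noteq> 0"
proof -
  have "infinite (range (of_real :: real \<Rightarrow> complex))"
    using finite_imageD[OF _ inj_of_real] infinite_UNIV_char_0 by blast
  then have "\<not> range (of_real :: real \<Rightarrow> complex) \<subseteq> {z. poly p z = 0}"
    using poly_roots_finite[OF assms] finite_subset by blast
  then show ?thesis
    using that by blast
qed

lemma invertible_lincomb_adjoint_mat:
  fixes X :: "complex^'n^'n"
  assumes "invertible X"
  obtains a where "invertible (mat a ** X + mat (cnj a) ** adjoint_mat X)"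
proof -
  define pencil :: "complex \<Rightarrow> complex^'n^'n" where
    "pencil t = (\<chi> i j. (X $ i $ j + cnj (X $ j $ i)) / 2 +
                          t * (\<i> * (cnj (X $ j $ i) - X $ i $ j) / 2))"
    for t
  obtain p where p: "\<And>t. poly p t = Determinants.det (pencil t)"
    using det_pencil_poly[of "\<chi> i j. (X $ i $ j + cnj (X $ j $ i)) / 2"
        "\<chi> i j. \<i> * (cnj (X $ j $ i) - X $ i $ j) / 2"]
    unfolding pencil_def by auto
  have "pencil \<i> = X"
    by (simp add: pencil_def Finite_Cartesian_Product.vec_eq_iff field_simps)
  then have "poly p \<i> \<noteq> 0"
    using p assms by (simp add: invertible_det_nz)
  then have "p \<noteq> 0"
    by auto
  then obtain r :: real where r: "poly p (of_real r) \<noteq> 0"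
    by (rule poly_nonzero_at_some_real)
  define a where "a = (1 - \<i> * of_real r) / 2"
  have "pencil (of_real r) = mat a ** X + mat (cnj a) ** adjoint_mat X"
    by (simp add: pencil_def a_def Finite_Cartesian_Product.vec_eq_iff field_simps)
  then have "invertible (mat a ** X + mat (cnj a) ** adjoint_mat X)"
    using r p by (simp add: invertible_det_nz)
  then show ?thesis
    by (rule that)
qed

lemma skew_adjoint_wrt_hermitian:
  assumes "invertible X" and "skew_adjoint_wrt X A"
  obtains G where "invertible G" and "hermitian_mat G" and "skew_adjoint_wrt G A"
proof -
  obtain a where "invertible (mat a ** X + mat (cnj a) ** adjoint_mat X)"
    using invertible_lincomb_adjoint_mat[OF assms(1)] .
  then show ?thesis
    using that hermitian_mat_lincomb_adjoint_mat
      skew_adjoint_wrt_lincomb[OF assms(2) skew_adjoint_wrt_adjoint_mat[OF assms(2)]]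
    by blast
qed

lemma skew_adjoint_wrt_iff_similarity:
  assumes "invertible X"
  shows "skew_adjoint_wrt X A \<longleftrightarrow> matrix_inv X ** adjoint_mat A ** X = - A"
proof
  assume "skew_adjoint_wrt X A"
  then show "matrix_inv X ** adjoint_mat A ** X = - A"
    unfolding skew_adjoint_wrt_def
    by (simp add: matrix_mul_uminus flip: matrix_mul_assoc)
      (simp add: matrix_mul_assoc matrix_inv_left[OF assms])
next
  assume "matrix_inv X ** adjoint_mat A ** X = - A"
  then have "X ** (matrix_inv X ** adjoint_mat A ** X) = - (X ** A)"
    by (simp add: matrix_mul_uminus)
  then show "skew_adjoint_wrt X A"
    unfolding skew_adjoint_wrt_def by (simp add: matrix_mul_assoc matrix_inv_right[OF assms])
qed

lemma G_Hamiltonian_iff_similar_adjoint_mat: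
  "G_Hamiltonian A \<longleftrightarrow> similar_matrix (adjoint_mat A) (- A)"
proof -
  have "G_Hamiltonian A \<longleftrightarrow> (\<exists>X. invertible X \<and> skew_adjoint_wrt X A)"
    unfolding G_Hamiltonian_iff_skew_adjoint_wrt by (blast elim: skew_adjoint_wrt_hermitian)
  also have "\<dots> \<longleftrightarrow> similar_matrix (adjoint_mat A) (- A)"
    unfolding similar_matrix_def using skew_adjoint_wrt_iff_similarity by blast
  finally show ?thesis .
qed

theorem theorem1:
  fixes A :: "complex^'n^'n"
  shows "G_Hamiltonian A \<longleftrightarrow>
    (\<exists>Q :: complex^'n^'n. invertible Q \<and> matrix_inv Q ** A ** Q = - mat_cnj A)"
proof -
  have "G_Hamiltonian A \<longleftrightarrow> similar_matrix (adjoint_mat A) (- A)"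
    by (rule G_Hamiltonian_iff_similar_adjoint_mat)
  also have "\<dots> \<longleftrightarrow> similar_matrix (mat_cnj A) (- A)"
    using similar_matrix_adjoint_mat_cnj[of A] similar_matrix_sym similar_matrix_trans by blast
  also have "\<dots> \<longleftrightarrow> similar_matrix (- mat_cnj A) A"
    using similar_matrix_uminus_iff[of "mat_cnj A" "- A"] by simp
  also have "\<dots> \<longleftrightarrow> similar_matrix A (- mat_cnj A)"
    using similar_matrix_sym by blast
  finally show ?thesis
    unfolding similar_matrix_def .
qed

end
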